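(* Let $\ell:\mathbb{R}^{m\times n}\to\mathbb{R}$ be differentiable and $L$-smooth with respect to the Frobenius norm, and suppose $\|\nabla \ell(W)\|_F\le G$ for all $W$. Let $U_r\in\mathbb{R}^{m\times r}$ have orthonormal columns and let $\Pi_{U_r}=U_rU_r^\top$ be the fixed rank-$r$ orthogonal projector. Fix a step size $\eta>0$ and an initial matrix $W_0\in\mathbb{R}^{m\times n}$. Define the unprojected gradient descent path $Z_0=W_0$, $Z_{t+1}=Z_t-\eta\nabla \ell(Z_t)$; the accumulated-projection iterate \[ W_T = W_0 - \eta\,\Pi_{U_r}\Bigl(\sum_{t=0}^{T-1}\nabla \ell(Z_t)\Bigr); \] and the sequential-projection iterates $P_0=W_0$, $P_{t+1}=P_t-\eta\,\Pi_{U_r}\nabla \ell(P_t)$. Then for any $T$, \[ \|W_T-P_T\|_F \le \frac{\eta^2}{2}\,L G\,T(T-1) + O\bigl((\eta L T)^3\bigr). \]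
   Context: A differentiable function $\ell:\mathbb{R}^{m\times n}\to\mathbb{R}$ is $L$-smooth with respect to the Frobenius norm $\|\cdot\|_F$ if $\|\nabla \ell(W_1)-\nabla \ell(W_2)\|_F \le L\,\|W_1-W_2\|_F$ for all $W_1,W_2\in\mathbb{R}^{m\times n}$. The term $O((\eta L T)^3)$ denotes a higher-order remainder as $\eta L T\to 0$. *)

theory Defs
  imports "HOL-Analysis.Analysis" "HOL-Library.Landau_Symbols"
begin

text \<open>Matrices in R^(m x n) are modelled as real^'n^'m; the norm on this type is
  the Frobenius norm and the inner product is the Frobenius inner product.\<close>

primrec gd_path :: "('a::real_vector \<Rightarrow> 'a) \<Rightarrow> real \<Rightarrow> 'a \<Rightarrow> nat \<Rightarrow> 'a" where
  "gd_path g \<eta> W0 0 = W0"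
| "gd_path g \<eta> W0 (Suc t) = gd_path g \<eta> W0 t - \<eta> *\<^sub>R g (gd_path g \<eta> W0 t)"

primrec seq_proj :: "('a \<Rightarrow> 'a) \<Rightarrow> ('a::real_vector \<Rightarrow> 'a) \<Rightarrow> real \<Rightarrow> 'a \<Rightarrow> nat \<Rightarrow> 'a" where
  "seq_proj Pr g \<eta> W0 0 = W0"
| "seq_proj Pr g \<eta> W0 (Suc t) = seq_proj Pr g \<eta> W0 t - \<eta> *\<^sub>R Pr (g (seq_proj Pr g \<eta> W0 t))"

end

theory Submission
  imports Defs
begin

text \<open>Since \<open>W\<^sub>T - P\<^sub>T = \<eta> \<Pi> (\<Sum>\<^sub>t<T \<nabla>\<ell>(P\<^sub>t) - \<nabla>\<ell>(Z\<^sub>t))\<close>, smoothness gives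
  \<open>\<parallel>W\<^sub>T - P\<^sub>T\<parallel> \<le> \<eta> L \<Sum>\<^sub>t<T \<parallel>Z\<^sub>t - P\<^sub>t\<parallel>\<close>. As \<open>\<Pi>\<close> and \<open>I - \<Pi>\<close> are contractions,
  the paths drift apart by at most
  \<open>\<eta> \<parallel>(I - \<Pi>) \<nabla>\<ell>(Z\<^sub>t)\<parallel> + \<eta> L \<parallel>Z\<^sub>t - P\<^sub>t\<parallel> \<le> \<eta> G + \<eta> L \<parallel>Z\<^sub>t - P\<^sub>t\<parallel>\<close> per step.
  Feeding the crude bound \<open>\<parallel>Z\<^sub>t - P\<^sub>t\<parallel> \<le> 2 \<eta> t G\<close> into this recursion yields
  \<open>\<parallel>Z\<^sub>t - P\<^sub>t\<parallel> \<le> \<eta> t G + \<eta>\<^sup>2 L G t (t - 1)\<close>, and summing over \<open>t < T\<close> gives the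
  leading term \<open>\<eta>\<^sup>2 L G T (T - 1) / 2\<close> plus an error of order \<open>\<eta>\<^sup>3 L\<^sup>2 G T\<^sup>3\<close>.\<close>

lemma sum_lessThan_of_nat: "(\<Sum>t<T. real t) = real T * (real T - 1) / 2"
  by (induction T) (auto simp: field_simps)

lemma norm_triangle_diff3:
  fixes a b c :: "'a::real_normed_vector"
  shows "norm (a - b - c) \<le> norm a + norm b + norm c"
  using norm_triangle_ineq4[of "a - b" c] norm_triangle_ineq4[of a b] by linarith

lemma lipschitz_constant_nonneg:
  fixes f :: "'a::euclidean_space \<Rightarrow> 'b::real_normed_vector"
  assumes "\<And>x y. norm (f x - f y) \<le> L * norm (x - y)"
  shows "0 \<le> L"
proof -
  obtain b :: 'a where "b \<in> Basis"
    using nonempty_Basis by blast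
  then have "0 < norm (b - 0)"
    using nonzero_Basis by simp
  moreover have "0 \<le> L * norm (b - 0)"
    using assms[of b 0] norm_ge_zero order_trans by blast
  ultimately show ?thesis
    by (simp add: zero_le_mult_iff)
qed

lemma self_adjoint_idempotent_norm_le:
  fixes P :: "'a::real_inner \<Rightarrow> 'a"
  assumes adjoint: "\<And>x y. P x \<bullet> y = x \<bullet> P y" and idem: "\<And>x. P (P x) = P x"
  shows "norm (P x) \<le> norm x" and "norm (x - P x) \<le> norm x"
proof -
  have "orthogonal (P x) (x - P x)"
    using adjoint[of x "P x"] by (simp add: orthogonal_def inner_diff_right idem inner_commute)
  then have "norm x ^ 2 = norm (P x) ^ 2 + norm (x - P x) ^ 2"
    using norm_add_Pythagorean[of "P x" "x - P x"] by simp
  then show "norm (P x) \<le> norm x" and "norm (x - P x) \<le> norm x"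
    by (auto intro: power2_le_imp_le)
qed

lemma linear_matrix_mult_left: "linear (\<lambda>X::real^'n^'m. (A::real^'m^'k) ** X)"
  by (rule linearI) (simp_all add: matrix_matrix_mult_def vec_eq_iff sum_distrib_left
        algebra_simps sum.distrib)

lemma inner_matrix_mult_left:
  fixes A :: "real^'m^'k" and X :: "real^'n^'m" and Y :: "real^'n^'k"
  shows "(A ** X) \<bullet> Y = X \<bullet> (transpose A ** Y)"
proof -
  have "(A ** X) \<bullet> Y = (\<Sum>i\<in>UNIV. \<Sum>j\<in>UNIV. \<Sum>k\<in>UNIV. A$i$k * X$k$j * Y$i$j)"
    by (simp only: inner_vec_def inner_real_def matrix_matrix_mult_def vec_lambda_beta
        sum_distrib_right)
  also have "\<dots> = (\<Sum>k\<in>UNIV. \<Sum>j\<in>UNIV. \<Sum>i\<in>UNIV. A$i$k * X$k$j * Y$i$j)"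
    by (subst sum.swap) (subst (1 2) sum.swap, rule refl)
  also have "\<dots> = X \<bullet> (transpose A ** Y)"
    by (simp only: inner_vec_def inner_real_def matrix_matrix_mult_def vec_lambda_beta
        sum_distrib_left transpose_def mult_ac)
  finally show ?thesis .
qed

lemma orthonormal_columns_projection_norm_le:
  fixes U :: "real^'r^'m" and X :: "real^'n^'m"
  assumes "transpose U ** U = mat 1"
  shows "norm ((U ** transpose U) ** X) \<le> norm X"
    and "norm (X - (U ** transpose U) ** X) \<le> norm X"
proof -
  have "((U ** transpose U) ** X) \<bullet> Y = X \<bullet> ((U ** transpose U) ** Y)" for X Y :: "real^'n^'m"
    by (simp add: inner_matrix_mult_left matrix_transpose_mul)
  moreover have "(U ** transpose U) ** ((U ** transpose U) ** X) = (U ** transpose U) ** X"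
    for X :: "real^'n^'m"
    by (metis assms matrix_mul_assoc matrix_mul_rid)
  ultimately show "norm ((U ** transpose U) ** X) \<le> norm X"
    and "norm (X - (U ** transpose U) ** X) \<le> norm X"
    using self_adjoint_idempotent_norm_le by blast+
qed

lemma seq_proj_eq_sum:
  "seq_proj Pr g \<eta> W0 T = W0 - \<eta> *\<^sub>R (\<Sum>t<T. Pr (g (seq_proj Pr g \<eta> W0 t)))"
  by (induction T) (simp_all add: algebra_simps)

locale projected_gradient =
  fixes Pr g :: "'a::real_normed_vector \<Rightarrow> 'a" and L G :: real
  assumes linear_Pr: "linear Pr"
    and norm_Pr_le: "\<And>x. norm (Pr x) \<le> norm x"
    and norm_minus_Pr_le: "\<And>x. norm (x - Pr x) \<le> norm x"
    and lipschitz_g: "\<And>x y. norm (g x - g y) \<le> L * norm (x - y)"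
    and norm_g_le: "\<And>x. norm (g x) \<le> G"
    and L_nonneg: "0 \<le> L"
begin

lemma G_nonneg: "0 \<le> G"
  using norm_g_le norm_ge_zero order_trans by blast

lemma gd_seq_proj_dist_crude:
  assumes "0 \<le> \<eta>"
  shows "norm (gd_path g \<eta> W0 t - seq_proj Pr g \<eta> W0 t) \<le> 2 * \<eta> * real t * G"
proof (induction t)
  case 0
  then show ?case by simp
next
  case (Suc t)
  define Z P where "Z = gd_path g \<eta> W0 t" and "P = seq_proj Pr g \<eta> W0 t"
  have "norm (g Z - Pr (g P)) \<le> 2 * G"
    using norm_triangle_ineq4[of "g Z" "Pr (g P)"] norm_g_le[of Z] norm_g_le[of P]
      norm_Pr_le[of "g P"] by linarith
  then have "norm (\<eta> *\<^sub>R (g Z - Pr (g P))) \<le> \<eta> * (2 * G)"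
    using assms by (simp add: mult_left_mono)
  then have "norm ((Z - P) - \<eta> *\<^sub>R (g Z - Pr (g P))) \<le> 2 * \<eta> * real t * G + \<eta> * (2 * G)"
    using norm_triangle_ineq4[of "Z - P" "\<eta> *\<^sub>R (g Z - Pr (g P))"] Suc.IH
    unfolding Z_def P_def by linarith
  then show ?case
    by (simp add: Z_def P_def algebra_simps)
qed

lemma gd_seq_proj_dist:
  assumes "0 \<le> \<eta>"
  shows "norm (gd_path g \<eta> W0 t - seq_proj Pr g \<eta> W0 t)
           \<le> \<eta> * real t * G + \<eta>^2 * L * G * real t * (real t - 1)"
proof (induction t)
  case 0
  then show ?case by simp
next
  case (Suc t)
  define Z P where "Z = gd_path g \<eta> W0 t" and "P = seq_proj Pr g \<eta> W0 t"
  have "norm (g Z - Pr (g Z)) \<le> G"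
    using norm_minus_Pr_le norm_g_le order_trans by blast
  then have drift: "norm (\<eta> *\<^sub>R (g Z - Pr (g Z))) \<le> \<eta> * G"
    using assms by (simp add: mult_left_mono)
  have "norm (Pr (g Z - g P)) \<le> L * norm (Z - P)"
    using norm_Pr_le lipschitz_g order_trans by blast
  also have "\<dots> \<le> L * (2 * \<eta> * real t * G)"
    using gd_seq_proj_dist_crude[OF assms, of W0 t] L_nonneg
    unfolding Z_def P_def by (rule mult_left_mono)
  finally have "norm (\<eta> *\<^sub>R Pr (g Z - g P)) \<le> \<eta> * (L * (2 * \<eta> * real t * G))"
    using assms by (simp add: mult_left_mono)
  then have "norm ((Z - P) - \<eta> *\<^sub>R (g Z - Pr (g Z)) - \<eta> *\<^sub>R Pr (g Z - g P))
      \<le> (\<eta> * real t * G + \<eta>^2 * L * G * real t * (real t - 1))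
        + \<eta> * G + \<eta> * (L * (2 * \<eta> * real t * G))"
    using norm_triangle_diff3[of "Z - P" "\<eta> *\<^sub>R (g Z - Pr (g Z))" "\<eta> *\<^sub>R Pr (g Z - g P)"]
      drift Suc.IH unfolding Z_def P_def by linarith
  then show ?case
    by (simp add: Z_def P_def algebra_simps power2_eq_square linear_diff[OF linear_Pr])
qed

lemma accumulated_seq_proj_dist:
  assumes "0 \<le> \<eta>"
  shows "norm ((W0 - \<eta> *\<^sub>R Pr (\<Sum>t<T. g (gd_path g \<eta> W0 t))) - seq_proj Pr g \<eta> W0 T)
           \<le> \<eta>^2 / 2 * L * G * real T * (real T - 1) + \<eta>^3 * L^2 * G * real T ^ 3"
proof -
  define Z P where "Z = gd_path g \<eta> W0" and "P = seq_proj Pr g \<eta> W0"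
  have dist_le: "L * norm (Z t - P t) \<le> \<eta> * L * G * real t + \<eta>^2 * L^2 * G * real T ^ 2"
    if "t < T" for t
  proof -
    have "real t * (real t - 1) \<le> real t * real t"
      by (simp add: mult_left_mono)
    also have "\<dots> \<le> real T ^ 2"
      using that by (simp add: power2_eq_square mult_mono)
    finally have "\<eta>^2 * L * G * (real t * (real t - 1)) \<le> \<eta>^2 * L * G * real T ^ 2"
      using G_nonneg L_nonneg by (intro mult_left_mono) auto
    then have "norm (Z t - P t) \<le> \<eta> * real t * G + \<eta>^2 * L * G * real T ^ 2"
      using gd_seq_proj_dist[OF assms, of W0 t] unfolding Z_def P_def mult.assoc by linarith
    then have "L * norm (Z t - P t) \<le> L * (\<eta> * real t * G + \<eta>^2 * L * G * real T ^ 2)"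
      using L_nonneg by (rule mult_left_mono)
    then show ?thesis
      by (simp add: algebra_simps power2_eq_square)
  qed
  have "Pr (\<Sum>t<T. g (P t) - g (Z t)) = (\<Sum>t<T. Pr (g (P t))) - Pr (\<Sum>t<T. g (Z t))"
    by (simp add: linear_sum[OF linear_Pr] linear_diff[OF linear_Pr] sum_subtractf)
  then have "(W0 - \<eta> *\<^sub>R Pr (\<Sum>t<T. g (Z t))) - P T = \<eta> *\<^sub>R Pr (\<Sum>t<T. g (P t) - g (Z t))"
    by (simp add: P_def seq_proj_eq_sum[of Pr g \<eta> W0 T] scaleR_diff_right)
  then have "norm ((W0 - \<eta> *\<^sub>R Pr (\<Sum>t<T. g (Z t))) - P T) \<le> \<eta> * norm (\<Sum>t<T. g (P t) - g (Z t))"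
    using assms norm_Pr_le by (simp add: mult_left_mono)
  also have "\<dots> \<le> \<eta> * (\<Sum>t<T. L * norm (Z t - P t))"
    by (intro mult_left_mono[OF _ assms] order_trans[OF norm_sum] sum_mono)
      (metis lipschitz_g norm_minus_commute)
  also have "\<dots> \<le> \<eta> * (\<Sum>t<T. \<eta> * L * G * real t + \<eta>^2 * L^2 * G * real T ^ 2)"
    using dist_le by (intro mult_left_mono[OF _ assms] sum_mono) blast
  also have "\<dots> = \<eta> * (\<eta> * L * G * (\<Sum>t<T. real t) + real T * (\<eta>^2 * L^2 * G * real T ^ 2))"
    by (simp add: sum.distrib sum_distrib_left)
  also have "\<dots> = \<eta>^2 / 2 * L * G * real T * (real T - 1) + \<eta>^3 * L^2 * G * real T ^ 3"
    by (simp add: sum_lessThan_of_nat field_simps power2_eq_square power3_eq_cube)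
  finally show ?thesis
    by (simp add: Z_def P_def)
qed

end

theorem theorem2:
  fixes loss :: "real^'n^'m \<Rightarrow> real"
    and g :: "real^'n^'m \<Rightarrow> real^'n^'m"
    and L G :: real
    and U :: "real^'r^'m"
    and W0 :: "real^'n^'m"
    and T :: nat
  assumes grad: "\<forall>W. (loss has_derivative (\<lambda>H. g W \<bullet> H)) (at W)"
    and smooth: "\<forall>W1 W2. norm (g W1 - g W2) \<le> L * norm (W1 - W2)"
    and bounded: "\<forall>W. norm (g W) \<le> G"
    and orth: "transpose U ** U = mat 1"
  shows "\<exists>R :: real \<Rightarrow> real.
           R \<in> O[at_right 0](\<lambda>\<eta>. (\<eta> * L * real T) ^ 3) \<and>
           (\<forall>\<eta>>0.
              norm ((W0 - \<eta> *\<^sub>R ((U ** transpose U) ** (\<Sum>t<T. g (gd_path g \<eta> W0 t))))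
                    - seq_proj (\<lambda>X. (U ** transpose U) ** X) g \<eta> W0 T)
              \<le> \<eta>^2 / 2 * L * G * real T * (real T - 1) + R \<eta>)"
proof -
  have L_nonneg: "0 \<le> L"
    using smooth by (intro lipschitz_constant_nonneg[of g]) blast
  interpret projected_gradient "\<lambda>X. (U ** transpose U) ** X" g L G
    by (rule projected_gradient.intro[OF linear_matrix_mult_left
          orthonormal_columns_projection_norm_le[OF orth]]) (use smooth bounded L_nonneg in auto)
  \<comment> \<open>For \<open>L = 0\<close> both \<open>R\<close> and the error term \<open>\<eta>\<^sup>3 L\<^sup>2 G T\<^sup>3\<close> vanish (\<open>G / 0 = 0\<close>).\<close>
  define R where "R = (\<lambda>\<eta>. G / L * (\<eta> * L * real T) ^ 3)"
  have "R \<in> O[at_right 0](\<lambda>\<eta>. (\<eta> * L * real T) ^ 3)"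
  proof (cases "G / L = 0")
    case True
    then show ?thesis unfolding R_def True by (simp add: zero_in_bigo)
  next
    case False
    then show ?thesis unfolding R_def by (rule landau_o.big.cmult_in_iff[THEN iffD2]) simp
  qed
  moreover have "R \<eta> = \<eta>^3 * L^2 * G * real T ^ 3" for \<eta>
    by (cases "L = 0") (simp_all add: R_def power3_eq_cube power2_eq_square)
  ultimately show ?thesis
    using accumulated_seq_proj_dist by (metis less_imp_le)
qed

end
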